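(* Let $\{|1\rangle,|2\rangle,|3\rangle\}$ be the standard basis of $\mathbb{C}^3$. For $i\in\{1,2,3\}$ let $X^{(i)},Y^{(i)},Z^{(i)}$ be the operators on $\mathbb{C}^3$ acting as the Pauli matrices $X,Y,Z$ on the two-dimensional subspace spanned by $\{|k\rangle:k\neq i\}$ (with respect to the two remaining basis vectors in increasing order) and as $0$ on $|i\rangle$. Then every separable state $\rho$ on $\mathbb{C}^3\otimes\mathbb{C}^3$ satisfies $$\sum_{i,j=1}^3\Big(|\operatorname{tr}(\rho\,X^{(i)}\otimes X^{(j)})|+|\operatorname{tr}(\rho\,Y^{(i)}\otimes Y^{(j)})|+|\operatorname{tr}(\rho\,Z^{(i)}\otimes Z^{(j)})|\Big)\le4.$$
   Context: A state on $\mathbb{C}^3\otimes\mathbb{C}^3$ is separable if it is a convex combination of product states $\rho_A\otimes\rho_B$. *)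

theory Defs
  imports "HOL-Analysis.Analysis"
begin

text \<open>Operators on C^3 are complex^3^3; the standard basis vectors |1>,|2>,|3>
  correspond to the indices 0,1,2 of the numeral type 3.
  Operators on C^3 (x) C^3 are indexed by pairs (type 3 \<times> 3).\<close>

definition hermitian_mat :: "complex^'n^'n \<Rightarrow> bool" where
  "hermitian_mat A \<longleftrightarrow> (\<forall>i j. A $ i $ j = cnj (A $ j $ i))"

definition psd_mat :: "complex^'n^'n \<Rightarrow> bool" where
  "psd_mat A \<longleftrightarrow> (\<forall>v :: complex^'n.
      Im (\<Sum>i\<in>UNIV. \<Sum>j\<in>UNIV. cnj (v $ i) * A $ i $ j * v $ j) = 0 \<and>
      Re (\<Sum>i\<in>UNIV. \<Sum>j\<in>UNIV. cnj (v $ i) * A $ i $ j * v $ j) \<ge> 0)"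

definition is_state :: "complex^'n^'n \<Rightarrow> bool" where
  "is_state A \<longleftrightarrow> hermitian_mat A \<and> psd_mat A \<and> trace A = 1"

definition kron :: "complex^'n^'n \<Rightarrow> complex^'m^'m \<Rightarrow> complex^('n \<times> 'm)^('n \<times> 'm)" where
  "kron A B = (\<chi> r. \<chi> c. A $ fst r $ fst c * B $ snd r $ snd c)"

definition separable :: "complex^('n::finite \<times> 'm::finite)^('n \<times> 'm) \<Rightarrow> bool" where
  "separable \<rho> \<longleftrightarrow> (\<exists>(N::nat) (p::nat \<Rightarrow> real) (A::nat \<Rightarrow> complex^'n^'n) (B::nat \<Rightarrow> complex^'m^'m).
      (\<forall>k<N. p k \<ge> 0 \<and> is_state (A k) \<and> is_state (B k)) \<and>
      (\<Sum>k<N. p k) = 1 \<and>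
      \<rho> = (\<Sum>k<N. of_real (p k) *s kron (A k) (B k)))"

text \<open>The two basis indices different from i, in increasing order.\<close>
definition lo3 :: "3 \<Rightarrow> 3" where
  "lo3 i = (if i = 0 then 1 else 0)"
definition hi3 :: "3 \<Rightarrow> 3" where
  "hi3 i = (if i = 2 then 1 else 2)"

definition embed2 :: "3 \<Rightarrow> 3 \<Rightarrow> complex \<Rightarrow> complex \<Rightarrow> complex \<Rightarrow> complex \<Rightarrow> complex^3^3" where
  "embed2 a b m00 m01 m10 m11 = (\<chi> r c.
      (if r = a \<and> c = a then m00 else 0) + (if r = a \<and> c = b then m01 else 0) +
      (if r = b \<and> c = a then m10 else 0) + (if r = b \<and> c = b then m11 else 0))"

definition pauliX :: "3 \<Rightarrow> complex^3^3" where
  "pauliX i = embed2 (lo3 i) (hi3 i) 0 1 1 0"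
definition pauliY :: "3 \<Rightarrow> complex^3^3" where
  "pauliY i = embed2 (lo3 i) (hi3 i) 0 (- \<i>) \<i> 0"
definition pauliZ :: "3 \<Rightarrow> complex^3^3" where
  "pauliZ i = embed2 (lo3 i) (hi3 i) 1 0 0 (-1)"

end

theory Submission
  imports Defs
begin

text \<open>
  For a qutrit state A with diagonal d and off-diagonal entries a_kl, the three sums
  x = sum_i |tr(A X_i)|, y = sum_i |tr(A Y_i)|, z = sum_i |tr(A Z_i)| equal
  2 sum |Re a_kl|, 2 sum |Im a_kl| and sum |d_k - d_l|.  Positivity gives |a_kl|^2 <= d_k d_l,
  and an elementary inequality in the square roots of the d_k then yields x^2 + y^2 + z^2 <= 4.
  For a product state the correlation sum factorises as x_A x_B + y_A y_B + z_A z_B, which is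
  at most 4 by Cauchy-Schwarz; the triangle inequality carries the bound over to convex
  combinations of product states.
\<close>

lemma pairwise_products_square_le:
  fixes u v w :: real
  shows "(u * v + u * w + v * w)^2 + (u^2 - w^2)^2 \<le> (u^2 + v^2 + w^2)^2"
proof -
  \<comment> \<open>Lagrange's identity for the vectors (v, w, w) and (u, u, v)\<close>
  have "(v^2 + 2 * w^2) * (2 * u^2 + v^2) - (u * v + u * w + v * w)^2
      = (v * u - w * u)^2 + (v * v - w * u)^2 + (w * v - w * u)^2"
    by (simp add: power2_eq_square algebra_simps)
  then have "(u * v + u * w + v * w)^2 \<le> (v^2 + 2 * w^2) * (2 * u^2 + v^2)"
    by (metis diff_ge_0_iff_ge sum_squares_ge_zero add_nonneg_nonneg zero_le_power2)
  also have "\<dots> = (u^2 + v^2 + w^2)^2 - (u^2 - w^2)^2"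
    by (simp add: power2_eq_square algebra_simps)
  finally show ?thesis
    by simp
qed

lemma sum_abs_diff3_eq_twice:
  fixes a b c :: real
  shows "\<exists>x\<in>{\<bar>a - b\<bar>, \<bar>a - c\<bar>, \<bar>b - c\<bar>}. \<bar>a - b\<bar> + \<bar>a - c\<bar> + \<bar>b - c\<bar> = 2 * x"
  by auto

lemma offdiag_spread_bound:
  fixes d0 d1 d2 m01 m02 m12 :: real
  assumes "0 \<le> d0" "0 \<le> d1" "0 \<le> d2" "0 \<le> m01 + m02 + m12"
    and "m01 \<le> sqrt (d0 * d1)" "m02 \<le> sqrt (d0 * d2)" "m12 \<le> sqrt (d1 * d2)"
  shows "4 * (m01 + m02 + m12)^2 + (\<bar>d0 - d1\<bar> + \<bar>d0 - d2\<bar> + \<bar>d1 - d2\<bar>)^2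
    \<le> 4 * (d0 + d1 + d2)^2"
proof -
  define u v w where "u = sqrt d0" and "v = sqrt d1" and "w = sqrt d2"
  have d: "d0 = u^2" "d1 = v^2" "d2 = w^2"
    using assms(1-3) by (simp_all add: u_def v_def w_def)
  have "m01 + m02 + m12 \<le> u * v + u * w + v * w"
    using assms(5-7) by (simp add: u_def v_def w_def real_sqrt_mult)
  then have m: "(m01 + m02 + m12)^2 \<le> (u * v + u * w + v * w)^2"
    using assms(4) by (rule power_mono)
  have "(u * v + u * w + v * w)^2 + (u^2 - v^2)^2 \<le> (u^2 + v^2 + w^2)^2"
    using pairwise_products_square_le[of u w v] by (simp add: ac_simps)
  moreover have "(u * v + u * w + v * w)^2 + (u^2 - w^2)^2 \<le> (u^2 + v^2 + w^2)^2"
    by (rule pairwise_products_square_le)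
  moreover have "(u * v + u * w + v * w)^2 + (v^2 - w^2)^2 \<le> (u^2 + v^2 + w^2)^2"
    using pairwise_products_square_le[of v u w] by (simp add: ac_simps)
  ultimately have pair: "(u * v + u * w + v * w)^2 + x^2 \<le> (d0 + d1 + d2)^2"
    if "x \<in> {\<bar>d0 - d1\<bar>, \<bar>d0 - d2\<bar>, \<bar>d1 - d2\<bar>}" for x
    using that unfolding d by auto
  obtain x where "x \<in> {\<bar>d0 - d1\<bar>, \<bar>d0 - d2\<bar>, \<bar>d1 - d2\<bar>}"
    and "\<bar>d0 - d1\<bar> + \<bar>d0 - d2\<bar> + \<bar>d1 - d2\<bar> = 2 * x"
    using sum_abs_diff3_eq_twice by blast
  then show ?thesis
    using pair[of x] m by (simp add: power_mult_distrib)
qed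

lemma dot3_le_of_squares_le:
  fixes x1 x2 x3 y1 y2 y3 c :: real
  assumes "x1^2 + x2^2 + x3^2 \<le> c" "y1^2 + y2^2 + y3^2 \<le> c"
  shows "x1 * y1 + x2 * y2 + x3 * y3 \<le> c"
proof -
  have "0 \<le> (x1 - y1)^2 + (x2 - y2)^2 + (x3 - y3)^2"
    by simp
  then show ?thesis
    using assms by (simp add: power2_eq_square algebra_simps)
qed

lemma sum_abs_Re_Im_le:
  fixes z :: "'a \<Rightarrow> complex"
  shows "(\<Sum>i\<in>I. \<bar>Re (z i)\<bar>)^2 + (\<Sum>i\<in>I. \<bar>Im (z i)\<bar>)^2 \<le> (\<Sum>i\<in>I. cmod (z i))^2"
proof -
  define w where "w i = Complex \<bar>Re (z i)\<bar> \<bar>Im (z i)\<bar>" for i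
  have "(\<Sum>i\<in>I. \<bar>Re (z i)\<bar>)^2 + (\<Sum>i\<in>I. \<bar>Im (z i)\<bar>)^2 = (cmod (\<Sum>i\<in>I. w i))^2"
    by (simp add: w_def cmod_power2 Re_sum Im_sum)
  also have "\<dots> \<le> (\<Sum>i\<in>I. cmod (w i))^2"
    by (intro power_mono norm_sum norm_ge_zero)
  also have "(\<Sum>i\<in>I. cmod (w i)) = (\<Sum>i\<in>I. cmod (z i))"
    by (simp add: w_def cmod_def)
  finally show ?thesis .
qed

lemma sum_sum_delta_mult:
  fixes f :: "'i::finite \<Rightarrow> 'k::finite \<Rightarrow> 'a::semiring_0"
  shows "(\<Sum>i\<in>UNIV. \<Sum>k\<in>UNIV. f i k * (if k = x \<and> i = y then m else 0)) = f y x * m"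
proof -
  have "f i k * (if k = x \<and> i = y then m else 0) = (if k = x then if i = y then f i k * m else 0 else 0)"
    for i k
    by simp
  then show ?thesis
    by simp
qed

lemma hermitian_mat_entry: "hermitian_mat A \<Longrightarrow> A $ j $ i = cnj (A $ i $ j)"
  unfolding hermitian_mat_def by blast

lemma hermitian_mat_diag_real:
  assumes "hermitian_mat A"
  shows "Im (A $ i $ i) = 0"
proof -
  have "Im (A $ i $ i) = Im (cnj (A $ i $ i))"
    using hermitian_mat_entry[OF assms, of i i] by (rule arg_cong)
  then show ?thesis
    by simp
qed

lemma quadratic_form_delta:
  fixes A :: "complex^'n^'n"
  shows "(\<Sum>i\<in>UNIV. \<Sum>j\<in>UNIV. cnj (if i = x then a else 0) * A $ i $ j * (if j = y then b else 0))
    = cnj a * A $ x $ y * b"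
proof -
  have pointwise: "cnj (if i = x then a else 0) * A $ i $ j * (if j = y then b else 0)
      = A $ i $ j * (if j = y \<and> i = x then cnj a * b else 0)" for i j
    by simp
  have "(\<Sum>i\<in>UNIV. \<Sum>j\<in>UNIV. cnj (if i = x then a else 0) * A $ i $ j * (if j = y then b else 0))
      = A $ x $ y * (cnj a * b)"
    unfolding pointwise by (rule sum_sum_delta_mult)
  then show ?thesis
    by (simp add: ac_simps)
qed

lemma psd_mat_principal_2x2:
  fixes A :: "complex^'n^'n"
  assumes "psd_mat A"
  shows "0 \<le> Re (cnj t * A $ k $ k * t + cnj t * A $ k $ l * s + cnj s * A $ l $ k * t + cnj s * A $ l $ l * s)"
proof -
  define v :: "complex^'n" where "v = (\<chi> j. (if j = k then t else 0) + (if j = l then s else 0))"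
  have "cnj (v $ i) * A $ i $ j * v $ j
      = cnj (if i = k then t else 0) * A $ i $ j * (if j = k then t else 0)
      + cnj (if i = k then t else 0) * A $ i $ j * (if j = l then s else 0)
      + cnj (if i = l then s else 0) * A $ i $ j * (if j = k then t else 0)
      + cnj (if i = l then s else 0) * A $ i $ j * (if j = l then s else 0)" for i j
    unfolding v_def by (simp only: vec_lambda_beta complex_cnj_add distrib_left distrib_right add_ac)
  then have form: "(\<Sum>i\<in>UNIV. \<Sum>j\<in>UNIV. cnj (v $ i) * A $ i $ j * v $ j)
      = cnj t * A $ k $ k * t + cnj t * A $ k $ l * s + cnj s * A $ l $ k * t + cnj s * A $ l $ l * s"
    by (simp only: sum.distrib quadratic_form_delta)
  have "0 \<le> Re (\<Sum>i\<in>UNIV. \<Sum>j\<in>UNIV. cnj (v $ i) * A $ i $ j * v $ j)"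
    using assms unfolding psd_mat_def by blast
  then show ?thesis
    unfolding form .
qed

lemma psd_mat_diag_nonneg:
  fixes A :: "complex^'n^'n"
  assumes "psd_mat A"
  shows "0 \<le> Re (A $ k $ k)"
  using psd_mat_principal_2x2[OF assms, of 1 k k 0] by simp

lemma psd_mat_offdiag_bound:
  fixes A :: "complex^'n^'n"
  assumes "hermitian_mat A" "psd_mat A"
  shows "(cmod (A $ k $ l))^2 \<le> Re (A $ k $ k) * Re (A $ l $ l)"
proof -
  define a p q where "a = A $ k $ l" and "p = Re (A $ k $ k)" and "q = Re (A $ l $ l)"
  have "A $ k $ k = of_real p" "A $ l $ l = of_real q" "A $ l $ k = cnj a"
    using hermitian_mat_diag_real[OF assms(1)] hermitian_mat_entry[OF assms(1), of k l]
    by (simp_all add: a_def p_def q_def complex_eq_iff)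
  then have form:
      "0 \<le> Re (cnj t * of_real p * t + cnj t * a * s + cnj s * cnj a * t + cnj s * of_real q * s)" for t s
    using psd_mat_principal_2x2[OF assms(2), of t k l s] by (simp add: a_def)
  have n: "(cmod a)^2 = (Re a)^2 + (Im a)^2"
    by (rule cmod_power2)
  have q_det: "0 \<le> q * (p * q - (cmod a)^2)"
    using form[of "of_real q" "- cnj a"] unfolding n by (simp add: power2_eq_square algebra_simps)
  have p_det: "0 \<le> p * (p * q - (cmod a)^2)"
    using form[of "- a" "of_real p"] unfolding n by (simp add: power2_eq_square algebra_simps)
  have degenerate: "0 \<le> p - 2 * (cmod a)^2 + (cmod a)^2 * q"
    using form[of 1 "- cnj a"] unfolding n by (simp add: power2_eq_square algebra_simps)
  have "0 \<le> p" "0 \<le> q"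
    using psd_mat_diag_nonneg[OF assms(2)] by (simp_all add: p_def q_def)
  have "(cmod a)^2 \<le> p * q"
  proof (cases "p + q = 0")
    case True
    with \<open>0 \<le> p\<close> \<open>0 \<le> q\<close> have "p = 0" "q = 0"
      by linarith+
    with degenerate show ?thesis
      by simp
  next
    case False
    from q_det p_det have "0 \<le> (p + q) * (p * q - (cmod a)^2)"
      by (simp add: distrib_right)
    with False \<open>0 \<le> p\<close> \<open>0 \<le> q\<close> show ?thesis
      by (simp add: zero_le_mult_iff)
  qed
  then show ?thesis
    by (simp add: a_def p_def q_def)
qed

lemma matrix_add_rdistrib: "(A + B) ** C = A ** C + B ** C"
  by (vector matrix_matrix_mult_def sum.distrib[symmetric] field_simps)

lemma trace_scaled_mult:
  fixes X :: "'a::real_algebra_1^'n^'n"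
  shows "trace ((of_real r *s X) ** P) = of_real r * trace (X ** P)"
  unfolding trace_def matrix_matrix_mult_def
  by (simp add: vector_scalar_mult_def of_real_def sum_distrib_left mult.assoc)

lemma trace_sum_scaled_mult:
  fixes M :: "'k \<Rightarrow> 'a::{real_algebra_1, comm_ring_1}^'n^'n"
  shows "trace ((\<Sum>k\<in>K. of_real (c k) *s M k) ** P) = (\<Sum>k\<in>K. of_real (c k) * trace (M k ** P))"
  by (induction K rule: infinite_finite_induct)
    (simp_all add: trace_def [of 0] matrix_add_rdistrib trace_add trace_scaled_mult)

lemma sum_UNIV_prod:
  "(\<Sum>r\<in>UNIV. f r) = (\<Sum>i\<in>UNIV. \<Sum>j\<in>UNIV. f (i, j))"
  by (metis UNIV_Times_UNIV sum.cartesian_product')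

lemma trace_kron: "trace (kron A B) = trace A * trace B"
  unfolding trace_def kron_def sum_product
  by (subst sum_UNIV_prod) simp

lemma kron_mult: "kron A B ** kron P Q = kron (A ** P) (B ** Q)"
  unfolding kron_def matrix_matrix_mult_def
  by (subst sum_UNIV_prod) (simp add: sum_product mult_ac)

lemma sum_UNIV_3: "sum f (UNIV::3 set) = f 0 + f 1 + f 2"
proof -
  have "(3::3) = 0"
    by simp
  then have U: "(UNIV::3 set) = {0, 1, 2}"
    using UNIV_3 by auto
  show ?thesis
    by (subst U) (simp add: ac_simps)
qed

lemma trace_mult_embed2:
  fixes A :: "complex^3^3"
  shows "trace (A ** embed2 a b m00 m01 m10 m11) = A $ a $ a * m00 + A $ b $ a * m01 + A $ a $ b * m10 + A $ b $ b * m11"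
proof -
  have "trace (A ** embed2 a b m00 m01 m10 m11)
    = (\<Sum>i\<in>UNIV. \<Sum>k\<in>UNIV. A $ i $ k * (if k = a \<and> i = a then m00 else 0))
    + (\<Sum>i\<in>UNIV. \<Sum>k\<in>UNIV. A $ i $ k * (if k = a \<and> i = b then m01 else 0))
    + (\<Sum>i\<in>UNIV. \<Sum>k\<in>UNIV. A $ i $ k * (if k = b \<and> i = a then m10 else 0))
    + (\<Sum>i\<in>UNIV. \<Sum>k\<in>UNIV. A $ i $ k * (if k = b \<and> i = b then m11 else 0))"
    unfolding trace_def matrix_matrix_mult_def embed2_def
    by (simp only: vec_lambda_beta distrib_left sum.distrib)
  then show ?thesis
    by (simp only: sum_sum_delta_mult)
qed

lemma cmod_trace_pauliX:
  assumes "hermitian_mat A"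
  shows "cmod (trace (A ** pauliX i)) = 2 * \<bar>Re (A $ lo3 i $ hi3 i)\<bar>"
proof -
  have "trace (A ** pauliX i) = of_real (2 * Re (A $ lo3 i $ hi3 i))"
    using hermitian_mat_entry[OF assms, of "lo3 i" "hi3 i"]
    by (simp add: pauliX_def trace_mult_embed2 complex_eq_iff)
  then show ?thesis
    by simp
qed

lemma cmod_trace_pauliY:
  assumes "hermitian_mat A"
  shows "cmod (trace (A ** pauliY i)) = 2 * \<bar>Im (A $ lo3 i $ hi3 i)\<bar>"
proof -
  have "trace (A ** pauliY i) = of_real (- 2 * Im (A $ lo3 i $ hi3 i))"
    using hermitian_mat_entry[OF assms, of "lo3 i" "hi3 i"]
    by (simp add: pauliY_def trace_mult_embed2 complex_eq_iff)
  then show ?thesis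
    by simp
qed

lemma cmod_trace_pauliZ:
  assumes "hermitian_mat A"
  shows "cmod (trace (A ** pauliZ i)) = \<bar>Re (A $ lo3 i $ lo3 i) - Re (A $ hi3 i $ hi3 i)\<bar>"
proof -
  have "trace (A ** pauliZ i) = of_real (Re (A $ lo3 i $ lo3 i) - Re (A $ hi3 i $ hi3 i))"
    using hermitian_mat_diag_real[OF assms, of "lo3 i"] hermitian_mat_diag_real[OF assms, of "hi3 i"]
    by (simp add: pauliZ_def trace_mult_embed2 complex_eq_iff)
  then show ?thesis
    by (simp only: norm_of_real)
qed

definition expect_abs_sum :: "('i::finite \<Rightarrow> complex^'n^'n) \<Rightarrow> complex^'n^'n \<Rightarrow> real" where
  "expect_abs_sum P A = (\<Sum>i\<in>UNIV. cmod (trace (A ** P i)))"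

definition corr_abs_sum ::
    "('i::finite \<Rightarrow> complex^'n^'n) \<Rightarrow> ('j::finite \<Rightarrow> complex^'m^'m)
      \<Rightarrow> complex^('n \<times> 'm)^('n \<times> 'm) \<Rightarrow> real" where
  "corr_abs_sum P Q \<rho> = (\<Sum>i\<in>UNIV. \<Sum>j\<in>UNIV. cmod (trace (\<rho> ** kron (P i) (Q j))))"

lemma corr_abs_sum_kron:
  "corr_abs_sum P Q (kron A B) = expect_abs_sum P A * expect_abs_sum Q B"
  by (simp add: corr_abs_sum_def expect_abs_sum_def kron_mult trace_kron norm_mult sum_product)

lemma corr_abs_sum_convex:
  assumes "\<And>k. k \<in> K \<Longrightarrow> 0 \<le> p k"
  shows "corr_abs_sum P Q (\<Sum>k\<in>K. of_real (p k) *s M k) \<le> (\<Sum>k\<in>K. p k * corr_abs_sum P Q (M k))"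
proof -
  have bound: "cmod (trace ((\<Sum>k\<in>K. of_real (p k) *s M k) ** R))
      \<le> (\<Sum>k\<in>K. p k * cmod (trace (M k ** R)))" for R
  proof -
    have "cmod (trace ((\<Sum>k\<in>K. of_real (p k) *s M k) ** R))
        = cmod (\<Sum>k\<in>K. of_real (p k) * trace (M k ** R))"
      by (simp only: trace_sum_scaled_mult)
    also have "\<dots> \<le> (\<Sum>k\<in>K. cmod (of_real (p k) * trace (M k ** R)))"
      by (rule norm_sum)
    also have "\<dots> = (\<Sum>k\<in>K. p k * cmod (trace (M k ** R)))"
      using assms by (intro sum.cong) (simp_all add: norm_mult)
    finally show ?thesis .
  qed
  have "corr_abs_sum P Q (\<Sum>k\<in>K. of_real (p k) *s M k)
      \<le> (\<Sum>i\<in>UNIV. \<Sum>j\<in>UNIV. \<Sum>k\<in>K. p k * cmod (trace (M k ** kron (P i) (Q j))))"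
    unfolding corr_abs_sum_def by (intro sum_mono bound)
  also have "\<dots> = (\<Sum>i\<in>UNIV. \<Sum>k\<in>K. \<Sum>j\<in>UNIV. p k * cmod (trace (M k ** kron (P i) (Q j))))"
    by (rule sum.cong[OF refl sum.swap])
  also have "\<dots> = (\<Sum>k\<in>K. p k * corr_abs_sum P Q (M k))"
    unfolding corr_abs_sum_def sum_distrib_left by (rule sum.swap)
  finally show ?thesis .
qed

lemma state_expect_abs_sums_bound:
  fixes A :: "complex^3^3"
  assumes "is_state A"
  shows "(expect_abs_sum pauliX A)^2 + (expect_abs_sum pauliY A)^2 + (expect_abs_sum pauliZ A)^2 \<le> 4"
proof -
  have herm: "hermitian_mat A" and psd: "psd_mat A" and tr: "trace A = 1"
    using assms unfolding is_state_def by auto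
  define a where "a i = A $ lo3 i $ hi3 i" for i
  define d where "d k = Re (A $ k $ k)" for k
  have "(expect_abs_sum pauliX A)^2 + (expect_abs_sum pauliY A)^2
      = 4 * ((\<Sum>i\<in>UNIV. \<bar>Re (a i)\<bar>)^2 + (\<Sum>i\<in>UNIV. \<bar>Im (a i)\<bar>)^2)"
    by (simp add: expect_abs_sum_def cmod_trace_pauliX[OF herm] cmod_trace_pauliY[OF herm] a_def
        sum_distrib_left[symmetric] power_mult_distrib)
  also have "\<dots> \<le> 4 * (\<Sum>i\<in>UNIV. cmod (a i))^2"
    using sum_abs_Re_Im_le[of a UNIV] by simp
  finally have XY: "(expect_abs_sum pauliX A)^2 + (expect_abs_sum pauliY A)^2 \<le> 4 * (\<Sum>i\<in>UNIV. cmod (a i))^2" .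
  have offdiag: "cmod (A $ k $ l) \<le> sqrt (d k * d l)" for k l
    using psd_mat_offdiag_bound[OF herm psd] unfolding d_def by (rule real_le_rsqrt)
  have "(\<Sum>i\<in>UNIV. cmod (a i)) = cmod (A $ 0 $ 1) + cmod (A $ 0 $ 2) + cmod (A $ 1 $ 2)"
    by (simp add: a_def sum_UNIV_3 lo3_def hi3_def ac_simps)
  moreover have "expect_abs_sum pauliZ A = \<bar>d 0 - d 1\<bar> + \<bar>d 0 - d 2\<bar> + \<bar>d 1 - d 2\<bar>"
    by (simp add: expect_abs_sum_def cmod_trace_pauliZ[OF herm] d_def sum_UNIV_3 lo3_def hi3_def ac_simps)
  ultimately have "4 * (\<Sum>i\<in>UNIV. cmod (a i))^2 + (expect_abs_sum pauliZ A)^2 \<le> 4 * (d 0 + d 1 + d 2)^2"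
    using psd_mat_diag_nonneg[OF psd] offdiag by (simp add: offdiag_spread_bound d_def)
  moreover have "d 0 + d 1 + d 2 = 1"
    using arg_cong[OF tr, of Re] by (simp add: trace_def sum_UNIV_3 d_def)
  ultimately show ?thesis
    using XY by simp
qed

lemma product_state_corr_bound:
  fixes A B :: "complex^3^3"
  assumes "is_state A" "is_state B"
  shows "corr_abs_sum pauliX pauliX (kron A B) + corr_abs_sum pauliY pauliY (kron A B)
      + corr_abs_sum pauliZ pauliZ (kron A B) \<le> 4"
  unfolding corr_abs_sum_kron
  by (intro dot3_le_of_squares_le state_expect_abs_sums_bound assms)

theorem mainTheorem17:
  fixes \<rho> :: "complex^(3 \<times> 3)^(3 \<times> 3)"
  assumes "separable \<rho>"
  shows "(\<Sum>i\<in>(UNIV::3 set). \<Sum>j\<in>(UNIV::3 set).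
            cmod (trace (\<rho> ** kron (pauliX i) (pauliX j)))
          + cmod (trace (\<rho> ** kron (pauliY i) (pauliY j)))
          + cmod (trace (\<rho> ** kron (pauliZ i) (pauliZ j)))) \<le> 4"
proof -
  obtain N p and A B :: "nat \<Rightarrow> complex^3^3"
    where states: "\<And>k. k < N \<Longrightarrow> 0 \<le> p k \<and> is_state (A k) \<and> is_state (B k)"
      and p_sum: "(\<Sum>k<N. p k) = 1"
      and \<rho>: "\<rho> = (\<Sum>k<N. of_real (p k) *s kron (A k) (B k))"
    using assms unfolding separable_def by blast
  define C where "C \<sigma> = corr_abs_sum pauliX pauliX \<sigma> + corr_abs_sum pauliY pauliY \<sigma>
      + corr_abs_sum pauliZ pauliZ \<sigma>" for \<sigma> :: "complex^(3 \<times> 3)^(3 \<times> 3)"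
  have "C \<rho> \<le> (\<Sum>k<N. p k * C (kron (A k) (B k)))"
    unfolding C_def \<rho> distrib_left sum.distrib
    by (intro add_mono corr_abs_sum_convex) (simp_all add: states)
  also have "\<dots> \<le> (\<Sum>k<N. p k * 4)"
    unfolding C_def using states by (intro sum_mono mult_left_mono product_state_corr_bound) auto
  also have "\<dots> = 4"
    by (simp add: p_sum sum_distrib_right[symmetric])
  finally show ?thesis
    by (simp add: C_def corr_abs_sum_def sum.distrib)
qed

end
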